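(* Let $\ell, s \in \mathbb{N}$ with $1\le s \leq \ell$, let $f,\Lambda,G,R,\Omega$ be as in the context, and let $\tau \in \mathbb{N}$ with $\tau \ge \deg_{\mathcal{H}}(\Lambda)$. Define $\Lambda_i := \Lambda^{s-i}\Omega^i$ for $i=0,\dots,s-1$ and $\Psi_t := \Lambda^s f^t$ for $t=1,\dots,\ell$. Then the vector $(\Lambda_0,\dots,\Lambda_{s-1},\Psi_1,\dots,\Psi_\ell)\in\mathcal{R}^{s+\ell}$ satisfies the conditions $$\sum_{i=0}^{s-1}\Lambda_i A_{t,i} \equiv \Psi_t \mod G_t \ \ (t=1,\dots,\ell),\qquad \deg_{\mathcal{H}}(\Lambda_i)\le s\tau+i(2g-1)\ \ (i=0,\dots,s-1),\qquad \deg_{\mathcal{H}}(\Psi_t)\le s\tau+tm\ \ (t=1,\dots,\ell),$$ where the congruences are in $\mathcal{R}$ (the difference lies in the ideal $G_t\mathcal{R}$).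
   Context: Let $q$ be a prime power and $\mathbb{F}_{q^2}$ the field with $q^2$ elements. The Hermitian curve $\mathcal{H}/\mathbb{F}_{q^2}$ is the smooth projective plane curve with affine equation $Y^q+Y=X^{q+1}$; it has genus $g=\tfrac12 q(q-1)$ and $q^3+1$ rational points $P_1,\dots,P_{q^3},P_\infty$, where $P_\infty$ is the point at infinity and $P_1,\dots,P_{q^3}$ are the affine rational points. Let $\mathcal{R} = \bigcup_{m\ge 0}\mathcal{L}(mP_\infty) = \mathbb{F}_{q^2}[X,Y]/(Y^q+Y-X^{q+1})$, which has $\mathbb{F}_{q^2}$-basis $\{X^iY^j : i\ge 0,\ 0\le j<q\}$, and let $\deg_{\mathcal{H}}(h) = -v_{P_\infty}(h)$ (so $\deg_{\mathcal{H}}(X^iY^j) = iq+j(q+1)$, $\deg_{\mathcal{H}}(0)=-\infty$). Let $n=q^3$ and $m\in\mathbb{N}$ with $2(g-1)<m<n$. Let $f \in \mathcal{L}(mP_\infty)$ (so $\deg_{\mathcal{H}} f \le m$), $\mathbf{c}=(f(P_1),\dots,f(P_n))$, $\mathbf{e}\in\mathbb{F}_{q^2}^n$, received word $\mathbf{r} = \mathbf{c}+\mathbf{e}$, and error positions $\mathcal{E}=\{i : e_i\neq 0\}$. An error locator is a nonzero $\Lambda \in \mathcal{R}$ with $\Lambda(P_i)=0$ for all $i\in\mathcal{E}$; fix one. Let $R\in\mathcal{R}$ with $\deg_{\mathcal{H}}(R) < n+2g$ and $R(P_i)=r_i$ for $i=1,\dots,n$. Let $G = X^{q^2}-X\in\mathcal{R}$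 (so $\deg_{\mathcal{H}} G = n$). Let $\Omega\in\mathcal{R}$ be the unique element with $\Omega G = \Lambda(f-R)$. For $t=1,\dots,\ell$ and $i=0,\dots,s-1$ set $A_{t,i} := \binom{t}{i}R^{t-i}G^i$ (which is $0$ if $i>t$), and $$G_t := X^{\lfloor (t(n+2g-1)+\tau)/q\rfloor+1} \text{ for } t=1,\dots,s-1,\qquad G_t := G^s \text{ for } t=s,\dots,\ell.$$ *)

theory Defs
  imports "HOL-Computational_Algebra.Polynomial" "HOL-Computational_Algebra.Primes"
    "HOL-Library.Extended_Real"
begin

text \<open>Elements of the coordinate ring R = F[X,Y]/(Y^q+Y-X^(q+1)) of the Hermitian curve are
  represented by bivariate polynomials of type 'a poly poly: the outer variable is Y,
  the inner (coefficient) variable is X.\<close>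

definition hX :: "'a::comm_ring_1 poly poly" where
  "hX = [:[:0, 1:]:]"

definition hY :: "'a::comm_ring_1 poly poly" where
  "hY = [:0, 1:]"

definition herm_poly :: "nat \<Rightarrow> 'a::comm_ring_1 poly poly" where
  "herm_poly q = hY ^ q + hY - hX ^ (q + 1)"

definition herm_eq :: "nat \<Rightarrow> 'a::comm_ring_1 poly poly \<Rightarrow> 'a poly poly \<Rightarrow> bool" where
  "herm_eq q a b \<longleftrightarrow> herm_poly q dvd (a - b)"

definition herm_cong :: "nat \<Rightarrow> 'a::comm_ring_1 poly poly \<Rightarrow> 'a poly poly \<Rightarrow> 'a poly poly \<Rightarrow> bool" where
  "herm_cong q a b c \<longleftrightarrow> (\<exists>h. herm_eq q (a - b) (c * h))"

text \<open>Reduced representative in the basis X^i Y^j, j < q (the divisor is monic in Y).\<close>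
definition herm_red :: "nat \<Rightarrow> 'a::idom poly poly \<Rightarrow> 'a poly poly" where
  "herm_red q p = pseudo_mod p (herm_poly q)"

text \<open>deg_H(h) = - v_{P_infinity}(h): maximum of i q + j (q+1) over the monomials X^i Y^j
  occurring in the reduced representative; deg_H 0 = -infinity (Sup of the empty set).\<close>
definition herm_deg :: "nat \<Rightarrow> 'a::idom poly poly \<Rightarrow> ereal" where
  "herm_deg q p = (SUP ij \<in> {(i, j). coeff (coeff (herm_red q p) j) i \<noteq> 0}.
                     ereal (real (fst ij * q + snd ij * (q + 1))))"

definition herm_eval :: "'a::comm_ring_1 poly poly \<Rightarrow> 'a \<times> 'a \<Rightarrow> 'a" where
  "herm_eval p P = poly (map_poly (\<lambda>c. poly c (fst P)) p) (snd P)"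

definition herm_affine_points :: "nat \<Rightarrow> ('a::comm_ring_1 \<times> 'a) set" where
  "herm_affine_points q = {(a, b). b ^ q + b = a ^ (q + 1)}"

end

theory Submission
  imports Defs
begin

text \<open>Write G = X^(q^2) - X and g = q(q-1)/2. By the binomial theorem
  \<Lambda>^s f^t = \<Sum>_(i\<le>t) (t choose i) R^(t-i) \<Lambda>^(s-i) (\<Lambda>(f - R))^i, and since \<Lambda>(f - R) = \<Omega> G in R,
  the summands with i < s are exactly the terms \<Lambda>_i A_(t,i). For t < s there are no other
  summands; for t \<ge> s the remaining ones are multiples of (\<Lambda>(f - R))^s = (\<Omega> G)^s, hence of G^s.
  For the degree bounds, deg_H is a weighted degree of the reduced representative, hence
  subadditive on products, and multiplication by G (a polynomial in X alone, monic of degree q^2)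
  raises it by exactly n = q^3; so deg \<Omega> \<le> deg \<Lambda> + deg (f - R) - n \<le> \<tau> + 2g - 1.
  Only the relation \<Omega> G = \<Lambda>(f - R) and the degree hypotheses are needed.\<close>

lemma pCons_const_power: "[:a:] ^ n = [:(a::'a::comm_ring_1) ^ n:]"
  by (induct n) (auto simp: one_pCons)

lemma hY_power: "(hY :: 'a::comm_ring_1 poly poly) ^ n = monom 1 n"
  by (simp add: hY_def monom_altdef)

lemma hX_power: "(hX :: 'a::comm_ring_1 poly poly) ^ n = [:monom 1 n:]"
  by (simp add: hX_def pCons_const_power monom_altdef)

lemma coeff_herm_poly:
  "coeff (herm_poly q :: 'a::comm_ring_1 poly poly) j =
     (if j = q then 1 else 0) + (if j = 1 then 1 else 0) - (if j = 0 then monom 1 (q + 1) else 0)"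
  unfolding herm_poly_def hY_power hX_power
  by (simp add: hY_def coeff_pCons split: nat.split)

lemma coeff_herm_poly_top:
  "q \<ge> 2 \<Longrightarrow> coeff (herm_poly q :: 'a::comm_ring_1 poly poly) q = 1"
  by (auto simp: coeff_herm_poly)

lemma degree_herm_poly:
  assumes "q \<ge> 2" shows "degree (herm_poly q :: 'a::comm_ring_1 poly poly) = q"
proof (rule antisym)
  show "degree (herm_poly q :: 'a poly poly) \<le> q"
    by (rule degree_le) (use assms in \<open>auto simp: coeff_herm_poly\<close>)
  show "q \<le> degree (herm_poly q :: 'a poly poly)"
    by (rule le_degree) (use assms in \<open>auto simp: coeff_herm_poly\<close>)
qed

lemma herm_poly_nonzero: "q \<ge> 2 \<Longrightarrow> herm_poly q \<noteq> (0 :: 'a::comm_ring_1 poly poly)"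
  using coeff_herm_poly_top by (metis coeff_0 zero_neq_one)

lemma hX_power_minus_hX: "(hX ^ n - hX :: 'a::comm_ring_1 poly poly) = [:monom 1 n - monom 1 1:]"
proof -
  have "(hX ^ n - hX ^ 1 :: 'a poly poly) = [:monom 1 n - monom 1 1:]"
    unfolding hX_power by simp
  then show ?thesis by simp
qed

subsection \<open>Weight bounds on representatives\<close>

definition herm_weight_le :: "nat \<Rightarrow> 'a::comm_ring_1 poly poly \<Rightarrow> real \<Rightarrow> bool" where
  "herm_weight_le q p d \<longleftrightarrow> (\<forall>i j. coeff (coeff p j) i \<noteq> 0 \<longrightarrow> real (i * q + j * (q + 1)) \<le> d)"

lemma herm_weight_le_1: "herm_weight_le q 1 0"
  by (auto simp: herm_weight_le_def coeff_1 split: if_splits)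

lemma herm_weight_le_diff:
  "herm_weight_le q a d \<Longrightarrow> herm_weight_le q b d \<Longrightarrow> herm_weight_le q (a - b) d"
  by (force simp: herm_weight_le_def)

lemma herm_weight_le_monom:
  "(\<And>i. coeff c i \<noteq> 0 \<Longrightarrow> real (i * q + k * (q + 1)) \<le> d) \<Longrightarrow> herm_weight_le q (monom c k) d"
  by (auto simp: herm_weight_le_def coeff_monom split: if_splits)

lemma herm_weight_le_mult:
  assumes a: "herm_weight_le q a da" and b: "herm_weight_le q b db"
  shows "herm_weight_le q (a * b) (da + db)"
  unfolding herm_weight_le_def
proof (intro allI impI)
  fix i j assume nz: "coeff (coeff (a * b) j) i \<noteq> 0"
  have "coeff (coeff (a * b) j) i =
      (\<Sum>u\<le>j. \<Sum>v\<le>i. coeff (coeff a u) v * coeff (coeff b (j - u)) (i - v))"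
    by (simp add: coeff_mult coeff_sum)
  with nz obtain u v where uv: "u \<le> j" "v \<le> i" "coeff (coeff a u) v \<noteq> 0"
      "coeff (coeff b (j - u)) (i - v) \<noteq> 0"
    by (metis (no_types, lifting) atMost_iff mult_not_zero sum.neutral)
  have "real (v * q + u * (q + 1)) \<le> da" using a uv unfolding herm_weight_le_def by blast
  moreover have "real ((i - v) * q + (j - u) * (q + 1)) \<le> db"
    using b uv unfolding herm_weight_le_def by blast
  moreover have "real (i * q + j * (q + 1))
      = real (v * q + u * (q + 1)) + real ((i - v) * q + (j - u) * (q + 1))"
    using uv(1,2) by (simp only: of_nat_add of_nat_mult of_nat_diff) (simp add: algebra_simps)
  ultimately show "real (i * q + j * (q + 1)) \<le> da + db"
    by linarith
qed

lemma herm_weight_le_herm_poly: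
  assumes "q \<ge> 2" shows "herm_weight_le q (herm_poly q) (real (q * (q + 1)))"
proof -
  have "1 \<le> real q" using assms by simp
  then have "1 \<le> real q * real q" using mult_mono[of 1 "real q" 1 "real q"] by simp
  then show ?thesis using assms
    by (auto simp: herm_weight_le_def coeff_herm_poly coeff_monom algebra_simps split: if_splits)
qed

lemma herm_weight_le_smult_cancel:
  fixes c :: "'a::idom poly"
  assumes w: "herm_weight_le q (smult c r) D" and c: "lead_coeff c = 1"
  shows "herm_weight_le q r (D - real (degree c * q))"
  unfolding herm_weight_le_def
proof (intro allI impI)
  fix i j assume nz: "coeff (coeff r j) i \<noteq> 0"
  then have "coeff r j \<noteq> 0" by auto
  moreover have "c \<noteq> 0" using c by auto
  ultimately have "degree (c * coeff r j) = degree c + degree (coeff r j)"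
    by (simp add: degree_mult_eq)
  moreover have "lead_coeff (c * coeff r j) \<noteq> 0"
    using c \<open>coeff r j \<noteq> 0\<close> by (simp add: lead_coeff_mult)
  ultimately have "coeff (coeff (smult c r) j) (degree c + degree (coeff r j)) \<noteq> 0" by simp
  then have "real ((degree c + degree (coeff r j)) * q + j * (q + 1)) \<le> D"
    using w unfolding herm_weight_le_def by blast
  moreover have "i \<le> degree (coeff r j)" using nz le_degree by blast
  then have "i * q + j * (q + 1) + degree c * q \<le> (degree c + degree (coeff r j)) * q + j * (q + 1)"
    by (simp add: add_mult_distrib)
  then have "real (i * q + j * (q + 1)) + real (degree c * q)
      \<le> real ((degree c + degree (coeff r j)) * q + j * (q + 1))"
    by (metis of_nat_add of_nat_le_iff)
  ultimately show "real (i * q + j * (q + 1)) \<le> D - real (degree c * q)"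
    by linarith
qed

lemma herm_deg_le_iff: "herm_deg q p \<le> ereal d \<longleftrightarrow> herm_weight_le q (herm_red q p) d"
  unfolding herm_deg_def herm_weight_le_def by (auto simp: SUP_le_iff)

lemma herm_deg_less_imp_le:
  assumes "herm_deg q p < ereal (real N)" shows "herm_deg q p \<le> ereal (real N - 1)"
  unfolding herm_deg_le_iff herm_weight_le_def
proof (intro allI impI)
  fix i j assume "coeff (coeff (herm_red q p) j) i \<noteq> 0"
  then have "ereal (real (i * q + j * (q + 1))) \<le> herm_deg q p"
    unfolding herm_deg_def by (intro SUP_upper2[of "(i, j)"]) auto
  then have "ereal (real (i * q + j * (q + 1))) < ereal (real N)"
    using assms by (rule order_le_less_trans)
  then have "i * q + j * (q + 1) < N" by (simp only: less_ereal.simps(1) of_nat_less_iff)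
  then show "real (i * q + j * (q + 1)) \<le> real N - 1" by linarith
qed

subsection \<open>Reduced representatives\<close>

context
  fixes q :: nat
  assumes q2: "q \<ge> 2"
begin

lemma degree_herm_reduction_step:
  fixes p :: "'a::comm_ring_1 poly poly"
  assumes "q \<le> degree p"
  shows "degree (p - monom (lead_coeff p) (degree p - q) * herm_poly q) < degree p"
proof -
  define p' where "p' = p - monom (lead_coeff p) (degree p - q) * herm_poly q"
  have "degree (monom (lead_coeff p) (degree p - q) * herm_poly q) \<le> degree p"
    using degree_mult_le[of "monom (lead_coeff p) (degree p - q)" "herm_poly q"]
      degree_monom_le[of "lead_coeff p" "degree p - q"] degree_herm_poly[OF q2, where 'a='a] assms
    by linarith
  then have le: "degree p' \<le> degree p" unfolding p'_def by (meson degree_diff_le order_refl)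
  have top: "coeff p' (degree p) = 0"
    using assms coeff_herm_poly_top[OF q2, where 'a='a] by (simp add: p'_def coeff_monom_mult)
  show "degree p' < degree p"
  proof (cases "p' = 0")
    case True
    then show ?thesis using assms q2 by simp
  next
    case False
    then have "degree p' \<noteq> degree p" using top leading_coeff_0_iff by metis
    with le show ?thesis by simp
  qed
qed

lemma herm_weight_le_reduction_step:
  fixes p :: "'a::comm_ring_1 poly poly"
  assumes w: "herm_weight_le q p d" and k: "q \<le> degree p"
  shows "herm_weight_le q (p - monom (lead_coeff p) (degree p - q) * herm_poly q) d"
proof -
  have "herm_weight_le q (monom (lead_coeff p) (degree p - q)) (d - real (q * (q + 1)))"
  proof (rule herm_weight_le_monom)
    fix i assume "coeff (lead_coeff p) i \<noteq> 0"
    then have "real (i * q + degree p * (q + 1)) \<le> d" using w unfolding herm_weight_le_def by blast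
    moreover have "(degree p - q) * (q + 1) + q * (q + 1) = degree p * (q + 1)"
      using k by (metis add_mult_distrib le_add_diff_inverse2)
    then have "real (i * q + degree p * (q + 1)) = real (i * q + (degree p - q) * (q + 1)) + real (q * (q + 1))"
      by (metis add.assoc of_nat_add)
    ultimately show "real (i * q + (degree p - q) * (q + 1)) \<le> d - real (q * (q + 1))"
      by linarith
  qed
  from herm_weight_le_mult[OF this herm_weight_le_herm_poly[OF q2]] show ?thesis
    by (intro herm_weight_le_diff[OF w]) simp
qed

lemma herm_weight_le_reduced_exists:
  fixes p :: "'a::comm_ring_1 poly poly"
  shows "herm_weight_le q p d \<Longrightarrow>
    \<exists>r. degree r < q \<and> herm_poly q dvd (p - r) \<and> herm_weight_le q r d"
proof (induction "degree p" arbitrary: p rule: less_induct)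
  case less
  show ?case
  proof (cases "degree p < q")
    case True
    then show ?thesis using less.prems by (intro exI[of _ p]) auto
  next
    case False
    define c where "c = monom (lead_coeff p) (degree p - q)"
    have "degree (p - c * herm_poly q) < degree p"
      using degree_herm_reduction_step[of p] False unfolding c_def by simp
    moreover have "herm_weight_le q (p - c * herm_poly q) d"
      using herm_weight_le_reduction_step[of p] less.prems False unfolding c_def by simp
    ultimately obtain r where r: "degree r < q"
        "herm_poly q dvd (p - c * herm_poly q - r)" "herm_weight_le q r d"
      using less.hyps by blast
    have "p - r = (p - c * herm_poly q - r) + herm_poly q * c" by (simp add: algebra_simps)
    with r show ?thesis by (metis dvd_add dvd_triv_left)
  qed
qed

lemma reduced_herm_rep_unique:
  fixes a b :: "'a::idom poly poly"
  assumes "degree a < q" "degree b < q" "herm_poly q dvd (a - b)"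
  shows "a = b"
proof (rule ccontr)
  assume "a \<noteq> b"
  obtain c where c: "a - b = herm_poly q * c" using assms(3) by (auto elim: dvdE)
  with \<open>a \<noteq> b\<close> have "c \<noteq> 0" by auto
  with c have "degree (a - b) = q + degree c"
    using degree_mult_eq[OF herm_poly_nonzero[OF q2] \<open>c \<noteq> 0\<close>] degree_herm_poly[OF q2] by simp
  moreover have "degree (a - b) < q" using degree_diff_le_max[of a b] assms(1,2) by simp
  ultimately show False by simp
qed

lemma degree_herm_red: "degree (herm_red q (p :: 'a::idom poly poly)) < q"
  and herm_poly_dvd_diff_herm_red: "herm_poly q dvd (p - herm_red q p)"
proof -
  obtain h where pd: "pseudo_divmod p (herm_poly q) = (h, herm_red q p)"
    by (metis herm_red_def pseudo_mod_def prod.collapse)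
  note div = pseudo_divmod[OF herm_poly_nonzero[OF q2] pd]
  have "lead_coeff (herm_poly q :: 'a poly poly) = 1"
    by (simp add: coeff_herm_poly_top[OF q2] degree_herm_poly[OF q2])
  with div(1) have "p = herm_poly q * h + herm_red q p" by simp
  then show "herm_poly q dvd (p - herm_red q p)" by (metis add_diff_cancel_right' dvd_triv_left)
  from div(2) show "degree (herm_red q p) < q" using q2 by (auto simp: degree_herm_poly[OF q2])
qed

lemma herm_red_eq_self:
  fixes p :: "'a::idom poly poly"
  assumes "degree p < q" shows "herm_red q p = p"
proof (rule reduced_herm_rep_unique[OF degree_herm_red assms])
  have "herm_red q p - p = - (p - herm_red q p)" by simp
  then show "herm_poly q dvd (herm_red q p - p)"
    by (simp only: dvd_minus_iff herm_poly_dvd_diff_herm_red)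
qed

lemma herm_red_cong:
  fixes a b :: "'a::idom poly poly"
  assumes "herm_poly q dvd (a - b)" shows "herm_red q a = herm_red q b"
proof (rule reduced_herm_rep_unique[OF degree_herm_red degree_herm_red])
  have "herm_red q a - herm_red q b = (a - b) - (a - herm_red q a) + (b - herm_red q b)"
    by (simp add: algebra_simps)
  then show "herm_poly q dvd (herm_red q a - herm_red q b)"
    by (simp only: dvd_add dvd_diff assms herm_poly_dvd_diff_herm_red)
qed

subsection \<open>The degree function\<close>

lemma herm_deg_cong:
  fixes a b :: "'a::idom poly poly"
  shows "herm_poly q dvd (a - b) \<Longrightarrow> herm_deg q a = herm_deg q b"
  unfolding herm_deg_def by (simp add: herm_red_cong)

lemma herm_deg_le_of_rep:
  fixes p x :: "'a::idom poly poly"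
  assumes "herm_weight_le q p d" "herm_poly q dvd (x - p)"
  shows "herm_deg q x \<le> ereal d"
proof -
  obtain r where "degree r < q" "herm_poly q dvd (p - r)" "herm_weight_le q r d"
    using herm_weight_le_reduced_exists[OF assms(1)] by blast
  moreover from this have "herm_red q x = r"
    by (metis assms(2) dvd_add herm_red_cong herm_red_eq_self diff_add_cancel add_diff_eq)
  ultimately show ?thesis unfolding herm_deg_le_iff by simp
qed

lemma herm_deg_mult:
  fixes a b :: "'a::idom poly poly"
  assumes "herm_deg q a \<le> ereal da" "herm_deg q b \<le> ereal db"
  shows "herm_deg q (a * b) \<le> ereal (da + db)"
proof (rule herm_deg_le_of_rep)
  show "herm_weight_le q (herm_red q a * herm_red q b) (da + db)"
    using assms by (intro herm_weight_le_mult) (auto simp: herm_deg_le_iff)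
  have "a * b - herm_red q a * herm_red q b =
      (a - herm_red q a) * b + herm_red q a * (b - herm_red q b)"
    by (simp add: algebra_simps)
  then show "herm_poly q dvd (a * b - herm_red q a * herm_red q b)"
    by (metis dvd_add dvd_mult dvd_mult2 herm_poly_dvd_diff_herm_red)
qed

lemma herm_deg_diff:
  fixes a b :: "'a::idom poly poly"
  assumes "herm_deg q a \<le> ereal d" "herm_deg q b \<le> ereal d"
  shows "herm_deg q (a - b) \<le> ereal d"
proof (rule herm_deg_le_of_rep)
  show "herm_weight_le q (herm_red q a - herm_red q b) d"
    using assms by (intro herm_weight_le_diff) (auto simp: herm_deg_le_iff)
  have "a - b - (herm_red q a - herm_red q b) = (a - herm_red q a) - (b - herm_red q b)"
    by (simp add: algebra_simps)
  then show "herm_poly q dvd (a - b - (herm_red q a - herm_red q b))"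
    by (metis dvd_diff herm_poly_dvd_diff_herm_red)
qed

lemma herm_deg_power:
  fixes a :: "'a::idom poly poly"
  assumes "herm_deg q a \<le> ereal d"
  shows "herm_deg q (a ^ k) \<le> ereal (real k * d)"
proof (induction k)
  case 0
  show ?case by (simp, rule herm_deg_le_of_rep[OF herm_weight_le_1]) simp
next
  case (Suc k)
  from herm_deg_mult[OF assms Suc] show ?case by (simp add: algebra_simps)
qed

lemma herm_deg_mult_hX_power_minus_hX:
  fixes W :: "'a::idom poly poly"
  assumes n: "n \<ge> 2" and deg: "herm_deg q (W * (hX ^ n - hX)) \<le> ereal D"
  shows "herm_deg q W \<le> ereal (D - real (n * q))"
proof -
  define c :: "'a poly" where "c = monom 1 n - monom 1 1"
  have coeff_c: "coeff c k = (if k = n then 1 else 0) - (if k = 1 then 1 else 0)" for k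
    by (simp add: c_def coeff_monom)
  have "degree c = n"
    by (intro antisym degree_le le_degree) (use n in \<open>auto simp: coeff_c\<close>)
  moreover have "lead_coeff c = 1" using n \<open>degree c = n\<close> by (simp add: coeff_c)
  moreover have "herm_red q (W * (hX ^ n - hX)) = smult c (herm_red q W)"
  proof -
    have "W * (hX ^ n - hX) - smult c (herm_red q W) = (W - herm_red q W) * [:c:]"
      by (simp add: hX_power_minus_hX c_def smult_diff_right)
    then have "herm_red q (W * (hX ^ n - hX)) = herm_red q (smult c (herm_red q W))"
      by (metis dvd_mult2 herm_poly_dvd_diff_herm_red herm_red_cong)
    also have "\<dots> = smult c (herm_red q W)"
      using degree_smult_le[of c "herm_red q W"] degree_herm_red[of W]
      by (intro herm_red_eq_self) linarith
    finally show ?thesis .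
  qed
  ultimately show ?thesis
    using deg herm_weight_le_smult_cancel unfolding herm_deg_le_iff by metis
qed

end

lemma dvd_power_diff: "(H :: 'a::comm_ring_1) dvd (a - b) \<Longrightarrow> H dvd (a ^ n - b ^ n)"
  unfolding power_diff_sumr2 by (rule dvd_mult2)

lemma binomial_expansion_times_power:
  fixes \<Lambda> f R :: "'a::comm_ring_1"
  shows  "\<Lambda> ^ s * f ^ t = (\<Sum>i\<le>t. of_nat (t choose i) * R ^ (t - i) * (\<Lambda> ^ s * (f - R) ^ i))"
proof -
  have "f ^ t = ((f - R) + R) ^ t" by simp
  also have "\<dots> = (\<Sum>i\<le>t. of_nat (t choose i) * (f - R) ^ i * R ^ (t - i))"
    by (rule binomial_ring)
  finally show ?thesis by (simp add: sum_distrib_left algebra_simps)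
qed

context
  fixes H \<Lambda> \<Omega> G f R :: "'a::comm_ring_1" and s t :: nat
  assumes key: "H dvd (\<Omega> * G - \<Lambda> * (f - R))"
begin

lemma sum_interpolation_terms_cong:
  "H dvd ((\<Sum>i<s. (\<Lambda> ^ (s - i) * \<Omega> ^ i) * (of_nat (t choose i) * R ^ (t - i) * G ^ i))
            - (\<Sum>i<s. of_nat (t choose i) * R ^ (t - i) * (\<Lambda> ^ s * (f - R) ^ i)))"
  unfolding sum_subtractf[symmetric]
proof (rule dvd_sum)
  fix i assume "i \<in> {..<s}"
  then have "\<Lambda> ^ s = \<Lambda> ^ (s - i) * \<Lambda> ^ i" by (simp flip: power_add)
  then have "\<Lambda> ^ s * (f - R) ^ i = \<Lambda> ^ (s - i) * (\<Lambda> * (f - R)) ^ i"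
    by (simp add: power_mult_distrib mult.assoc)
  then have "(\<Lambda> ^ (s - i) * \<Omega> ^ i) * (of_nat (t choose i) * R ^ (t - i) * G ^ i)
      - of_nat (t choose i) * R ^ (t - i) * (\<Lambda> ^ s * (f - R) ^ i)
      = (of_nat (t choose i) * R ^ (t - i) * \<Lambda> ^ (s - i)) * ((\<Omega> * G) ^ i - (\<Lambda> * (f - R)) ^ i)"
    by (simp add: power_mult_distrib algebra_simps)
  then show "H dvd (\<Lambda> ^ (s - i) * \<Omega> ^ i * (of_nat (t choose i) * R ^ (t - i) * G ^ i)
      - of_nat (t choose i) * R ^ (t - i) * (\<Lambda> ^ s * (f - R) ^ i))"
    by (simp add: dvd_mult dvd_power_diff[OF key])
qed

lemma interpolation_cong_less:
  assumes "t < s"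
  shows "H dvd ((\<Sum>i<s. (\<Lambda> ^ (s - i) * \<Omega> ^ i) * (of_nat (t choose i) * R ^ (t - i) * G ^ i))
                 - \<Lambda> ^ s * f ^ t)"
proof -
  have "(\<Sum>i\<le>t. of_nat (t choose i) * R ^ (t - i) * (\<Lambda> ^ s * (f - R) ^ i))
      = (\<Sum>i<s. of_nat (t choose i) * R ^ (t - i) * (\<Lambda> ^ s * (f - R) ^ i))"
    using assms by (intro sum.mono_neutral_left) (auto simp: binomial_eq_0)
  then show ?thesis
    using sum_interpolation_terms_cong binomial_expansion_times_power[of \<Lambda> s f t R] by simp
qed

lemma interpolation_cong_ge:
  assumes "s \<le> t"
  shows "\<exists>h. H dvd ((\<Sum>i<s. (\<Lambda> ^ (s - i) * \<Omega> ^ i) * (of_nat (t choose i) * R ^ (t - i) * G ^ i))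
                     - \<Lambda> ^ s * f ^ t - G ^ s * h)"
proof -
  define T where "T i = of_nat (t choose i) * R ^ (t - i) * (\<Lambda> ^ s * (f - R) ^ i)" for i
  define K where "K = (\<Sum>i\<in>{s..t}. of_nat (t choose i) * R ^ (t - i) * (f - R) ^ (i - s))"
  have "{..t} = {..<s} \<union> {s..t}" using assms by auto
  then have "\<Lambda> ^ s * f ^ t = (\<Sum>i<s. T i) + (\<Sum>i\<in>{s..t}. T i)"
    unfolding binomial_expansion_times_power[of \<Lambda> s f t R] T_def[symmetric]
    by (simp add: sum.union_disjoint ivl_disj_int)
  also have "(\<Sum>i\<in>{s..t}. T i) = (\<Lambda> * (f - R)) ^ s * K"
    unfolding K_def sum_distrib_left
  proof (rule sum.cong[OF refl])
    fix i assume "i \<in> {s..t}"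
    then have "(f - R) ^ i = (f - R) ^ s * (f - R) ^ (i - s)" by (simp add: power_add[symmetric])
    then show "T i = (\<Lambda> * (f - R)) ^ s * (of_nat (t choose i) * R ^ (t - i) * (f - R) ^ (i - s))"
      by (simp add: T_def power_mult_distrib ac_simps)
  qed
  finally have "(\<Sum>i<s. (\<Lambda> ^ (s - i) * \<Omega> ^ i) * (of_nat (t choose i) * R ^ (t - i) * G ^ i))
      - \<Lambda> ^ s * f ^ t - G ^ s * (- (\<Omega> ^ s * K))
      = ((\<Sum>i<s. (\<Lambda> ^ (s - i) * \<Omega> ^ i) * (of_nat (t choose i) * R ^ (t - i) * G ^ i))
         - (\<Sum>i<s. T i)) + ((\<Omega> * G) ^ s - (\<Lambda> * (f - R)) ^ s) * K"
    by (simp add: power_mult_distrib algebra_simps)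
  moreover have "H dvd \<dots>"
    using sum_interpolation_terms_cong dvd_power_diff[OF key]
    unfolding T_def by (simp add: dvd_add dvd_mult2)
  ultimately show ?thesis by metis
qed

end

lemma herm_cong_interpolation_sum:
  fixes \<Lambda> \<Omega> f R G C :: "'a::comm_ring_1 poly poly"
  assumes "herm_eq q (\<Omega> * G) (\<Lambda> * (f - R))"
  shows "herm_cong q (\<Sum>i<s. (\<Lambda> ^ (s - i) * \<Omega> ^ i) * (of_nat (t choose i) * R ^ (t - i) * G ^ i))
           (\<Lambda> ^ s * f ^ t) (if t < s then C else G ^ s)"
proof -
  have key: "herm_poly q dvd (\<Omega> * G - \<Lambda> * (f - R))" using assms unfolding herm_eq_def .
  show ?thesis
  proof (cases "t < s")
    case True
    with interpolation_cong_less[OF key] show ?thesis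
      unfolding herm_cong_def herm_eq_def by (intro exI[of _ 0]) simp
  next
    case False
    with interpolation_cong_ge[OF key, where s = s and t = t] show ?thesis
      unfolding herm_cong_def herm_eq_def by simp
  qed
qed

lemma prime_power_ge_2:
  assumes "\<exists>p k. prime p \<and> k \<ge> 1 \<and> q = p ^ k" shows "(q::nat) \<ge> 2"
proof -
  obtain p k where "prime p" "k \<ge> 1" "q = p ^ k" using assms by blast
  then have "p \<le> q" using prime_gt_0_nat[of p] by (simp add: self_le_power)
  then show ?thesis using prime_ge_2_nat[OF \<open>prime p\<close>] by linarith
qed

lemma herm_deg_power_mult_power:
  fixes a b :: "'a::idom poly poly"
  assumes "q \<ge> 2" "herm_deg q a \<le> ereal x" "herm_deg q b \<le> ereal y"
  shows "herm_deg q (a ^ j * b ^ k) \<le> ereal (real j * x + real k * y)"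
  using assms by (intro herm_deg_mult herm_deg_power)

lemma herm_deg_Omega_le:
  fixes \<Lambda> \<Omega> f R :: "'a::idom poly poly"
  assumes q2: "q \<ge> 2"
    and Omega_def: "herm_eq q (\<Omega> * (hX ^ (q ^ 2) - hX)) (\<Lambda> * (f - R))"
    and "herm_deg q \<Lambda> \<le> ereal \<tau>"
    and "herm_deg q f < ereal (real N)" "herm_deg q R < ereal (real N)"
  shows "herm_deg q \<Omega> \<le> ereal (\<tau> + real N - 1 - real (q ^ 3))"
proof -
  have "herm_deg q (\<Lambda> * (f - R)) \<le> ereal (\<tau> + (real N - 1))"
    using assms by (intro herm_deg_mult herm_deg_diff herm_deg_less_imp_le)
  then have "herm_deg q (\<Omega> * (hX ^ (q ^ 2) - hX)) \<le> ereal (\<tau> + (real N - 1))"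
    using herm_deg_cong[OF q2] Omega_def unfolding herm_eq_def by metis
  moreover have "q ^ 2 \<ge> 2" using q2 mult_le_mono[OF q2, of 1 q] by (simp add: power2_eq_square)
  ultimately have "herm_deg q \<Omega> \<le> ereal (\<tau> + (real N - 1) - real (q ^ 2 * q))"
    using herm_deg_mult_hX_power_minus_hX[OF q2] by blast
  then show ?thesis by (simp add: power2_eq_square power3_eq_cube algebra_simps)
qed

theorem theorem2:
  fixes q m l s \<tau> :: nat
    and P :: "nat \<Rightarrow> 'a::{finite, field} \<times> 'a"
    and f \<Lambda> R \<Omega> :: "'a poly poly"
    and e r :: "nat \<Rightarrow> 'a"
  assumes q_pp: "\<exists>p k. prime p \<and> k \<ge> 1 \<and> q = p ^ k"
    and card_F: "card (UNIV :: 'a set) = q ^ 2"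
    and m_lo: "2 * (int (q * (q - 1) div 2) - 1) < int m"
    and m_hi: "m < q ^ 3"
    and P_enum: "bij_betw P {1..q ^ 3} (herm_affine_points q)"
    and f_deg: "herm_deg q f \<le> ereal (real m)"
    and r_def: "\<forall>i\<in>{1..q ^ 3}. r i = herm_eval f (P i) + e i"
    and Lambda_nz: "\<not> herm_eq q \<Lambda> 0"
    and Lambda_loc: "\<forall>i\<in>{1..q ^ 3}. e i \<noteq> 0 \<longrightarrow> herm_eval \<Lambda> (P i) = 0"
    and R_deg: "herm_deg q R < ereal (real (q ^ 3 + 2 * (q * (q - 1) div 2)))"
    and R_interp: "\<forall>i\<in>{1..q ^ 3}. herm_eval R (P i) = r i"
    and Omega_def: "herm_eq q (\<Omega> * (hX ^ (q ^ 2) - hX)) (\<Lambda> * (f - R))"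
    and s_ge: "1 \<le> s" and s_le: "s \<le> l"
    and tau_ge: "herm_deg q \<Lambda> \<le> ereal (real \<tau>)"
  shows
    "(\<forall>t\<in>{1..l}.
        herm_cong q
          (\<Sum>i<s. (\<Lambda> ^ (s - i) * \<Omega> ^ i) *
                  (of_nat (t choose i) * R ^ (t - i) * (hX ^ (q ^ 2) - hX) ^ i))
          (\<Lambda> ^ s * f ^ t)
          (if t < s
           then hX ^ ((t * (q ^ 3 + 2 * (q * (q - 1) div 2) - 1) + \<tau>) div q + 1)
           else (hX ^ (q ^ 2) - hX) ^ s))
     \<and> (\<forall>i<s. herm_deg q (\<Lambda> ^ (s - i) * \<Omega> ^ i)
               \<le> ereal (real (s * \<tau>) + real i * (2 * real (q * (q - 1) div 2) - 1)))
     \<and> (\<forall>t\<in>{1..l}. herm_deg q (\<Lambda> ^ s * f ^ t) \<le> ereal (real (s * \<tau> + t * m)))"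
proof -
  have q2: "q \<ge> 2" using q_pp by (rule prime_power_ge_2)
  define g where "g = q * (q - 1) div 2"
  have "m < q ^ 3 + 2 * g" using m_hi by linarith
  then have "herm_deg q f < ereal (real (q ^ 3 + 2 * g))"
    using f_deg by (simp only: less_ereal.simps(1) of_nat_less_iff order_le_less_trans)
  from herm_deg_Omega_le[OF q2 Omega_def tau_ge this R_deg[folded g_def]]
  have Omega_deg: "herm_deg q \<Omega> \<le> ereal (real \<tau> + (2 * real g - 1))" by simp
  have "herm_deg q (\<Lambda> ^ (s - i) * \<Omega> ^ i) \<le> ereal (real (s * \<tau>) + real i * (2 * real g - 1))"
    if "i < s" for i
  proof -
    have "real (s - i) * real \<tau> + real i * (real \<tau> + (2 * real g - 1))
        = real (s * \<tau>) + real i * (2 * real g - 1)"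
      using \<open>i < s\<close> by (simp add: of_nat_diff algebra_simps)
    then show ?thesis using herm_deg_power_mult_power[OF q2 tau_ge Omega_deg, of "s - i" i] by simp
  qed
  moreover have "herm_deg q (\<Lambda> ^ s * f ^ t) \<le> ereal (real (s * \<tau> + t * m))" for t
    using herm_deg_power_mult_power[OF q2 tau_ge f_deg, of s t] by simp
  ultimately show ?thesis
    using herm_cong_interpolation_sum[OF Omega_def] unfolding g_def by blast
qed

end
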